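(* Let $F(x)$ be a quantifier-free formula and let $\mathbf c$ be a nonempty finite set of object constants containing every object constant occurring in $F(x)$. (a) If $x$ is positively weakly restricted in $F(x)$, then $\neg\mathit{in}_{\mathbf c}(x)\rightarrow(F(x)\leftrightarrow\top)$ is derivable from $\mathit{SPP}_{\mathbf c}$ in $\mathbf{INT}^=$. (b) If $x$ is negatively weakly restricted in $F(x)$, then $\neg\mathit{in}_{\mathbf c}(x)\rightarrow(F(x)\leftrightarrow\bot)$ is derivable from $\mathit{SPP}_{\mathbf c}$ in $\mathbf{INT}^=$.
   Context: Formulas are first-order formulas with object constants, predicate constants and equality, but no function constants of arity $>0$; primitive connectives $\bot,\land,\lor,\rightarrow$; $\neg G$ is $G\rightarrow\bot$, $\top$ is $\bot\rightarrow\bot$, $G\leftrightarrow H$ is $(G\rightarrow H)\land(H\rightarrow G)$. Restricted variables: for quantifier-free $G$, $\mathrm{RV}(G)$ is: $\emptyset$ if $G$ is an equality between two variables; the set of variables of $G$ if $G$ is any other atomic formula; $\mathrm{RV}(\bot)=\emptyset$; $\mathrm{RV}(G\land H)=\mathrm{RV}(G)\cup\mathrm{RV}(H)$; $\mathrm{RV}(G\lor H)=\mathrm{RV}(G)\cap\mathrm{RV}(H)$; $\mathrm{RV}(G\rightarrow H)=\emptyset$. Simplification transformations: $\neg\bot\mapsto\top$, $\neg\top\mapsto\bot$; $\bot\land G\mapsto\bot$, $G\land\bot\mapsto\bot$, $\top\land G\mapsto G$, $G\land\top\mapsto G$; $\bot\lor G\mapsto G$, $G\lor\bot\mapsto G$,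 $\top\lor G\mapsto\top$, $G\lor\top\mapsto\top$; $\bot\rightarrow G\mapsto\top$, $G\rightarrow\top\mapsto\top$, $\top\rightarrow G\mapsto G$. A variable $x$ is positively (resp. negatively) weakly restricted in a quantifier-free formula $G$ if the formula obtained from $G$ by first replacing every atomic formula $A$ of $G$ with $x\in\mathrm{RV}(A)$ by $\bot$ and then applying the simplification transformations is $\top$ (resp. $\bot$). For a finite set $\mathbf c$ of object constants, $\mathit{in}_{\mathbf c}(x_1,\dots,x_m)$ is $\bigwedge_{1\le j\le m}\bigvee_{c\in\mathbf c}x_j=c$, and $\mathit{SPP}_{\mathbf c}$ is the conjunction of the sentences $\forall\mathbf x(p_i(\mathbf x)\rightarrow\mathit{in}_{\mathbf c}(\mathbf x))$ over all predicate constants $p_i$ occurring in $F(x)$. $\mathbf{INT}^=$ is intuitionistic predicate logic with equality. *)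

theory Defs
  imports Main
begin

text \<open>Variables are de Bruijn indices (Var n); free variables are the loose indices.
  Object constants have type 'c, predicate constants have type 'p.  A predicate
  constant is identified together with its arity (the length of its argument list).\<close>

datatype 'c trm = Var nat | Const 'c

datatype ('p, 'c) fm =
    Pred 'p "'c trm list"
  | Eq "'c trm" "'c trm"
  | Bot
  | And "('p, 'c) fm" "('p, 'c) fm"
  | Or "('p, 'c) fm" "('p, 'c) fm"
  | Imp "('p, 'c) fm" "('p, 'c) fm"
  | All "('p, 'c) fm"
  | Ex "('p, 'c) fm"

definition Neg :: "('p, 'c) fm \<Rightarrow> ('p, 'c) fm" where
  "Neg G = Imp G Bot"

definition Top :: "('p, 'c) fm" where
  "Top = Imp Bot Bot"

definition Iff :: "('p, 'c) fm \<Rightarrow> ('p, 'c) fm \<Rightarrow> ('p, 'c) fm" where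
  "Iff G H = And (Imp G H) (Imp H G)"

fun BigAnd :: "('p, 'c) fm list \<Rightarrow> ('p, 'c) fm" where
  "BigAnd [] = Top"
| "BigAnd [G] = G"
| "BigAnd (G # Gs) = And G (BigAnd Gs)"

fun BigOr :: "('p, 'c) fm list \<Rightarrow> ('p, 'c) fm" where
  "BigOr [] = Bot"
| "BigOr [G] = G"
| "BigOr (G # Gs) = Or G (BigOr Gs)"

fun Alls :: "nat \<Rightarrow> ('p, 'c) fm \<Rightarrow> ('p, 'c) fm" where
  "Alls 0 G = G"
| "Alls (Suc n) G = All (Alls n G)"

fun qfree :: "('p, 'c) fm \<Rightarrow> bool" where
  "qfree (Pred p ts) = True"
| "qfree (Eq s t) = True"
| "qfree Bot = True"
| "qfree (And G H) = (qfree G \<and> qfree H)"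
| "qfree (Or G H) = (qfree G \<and> qfree H)"
| "qfree (Imp G H) = (qfree G \<and> qfree H)"
| "qfree (All G) = False"
| "qfree (Ex G) = False"

fun consts_trm :: "'c trm \<Rightarrow> 'c set" where
  "consts_trm (Var n) = {}"
| "consts_trm (Const c) = {c}"

fun consts_fm :: "('p, 'c) fm \<Rightarrow> 'c set" where
  "consts_fm (Pred p ts) = (\<Union>t\<in>set ts. consts_trm t)"
| "consts_fm (Eq s t) = consts_trm s \<union> consts_trm t"
| "consts_fm Bot = {}"
| "consts_fm (And G H) = consts_fm G \<union> consts_fm H"
| "consts_fm (Or G H) = consts_fm G \<union> consts_fm H"
| "consts_fm (Imp G H) = consts_fm G \<union> consts_fm H"
| "consts_fm (All G) = consts_fm G"
| "consts_fm (Ex G) = consts_fm G"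

fun preds :: "('p, 'c) fm \<Rightarrow> ('p \<times> nat) list" where
  "preds (Pred p ts) = [(p, length ts)]"
| "preds (Eq s t) = []"
| "preds Bot = []"
| "preds (And G H) = preds G @ preds H"
| "preds (Or G H) = preds G @ preds H"
| "preds (Imp G H) = preds G @ preds H"
| "preds (All G) = preds G"
| "preds (Ex G) = preds G"

fun vars_trm :: "'c trm \<Rightarrow> nat set" where
  "vars_trm (Var n) = {n}"
| "vars_trm (Const c) = {}"

text \<open>RV, for quantifier-free formulas (the quantifier clauses are irrelevant).\<close>
fun RV :: "('p, 'c) fm \<Rightarrow> nat set" where
  "RV (Pred p ts) = (\<Union>t\<in>set ts. vars_trm t)"
| "RV (Eq s t) = (case (s, t) of (Var _, Var _) \<Rightarrow> {} | _ \<Rightarrow> vars_trm s \<union> vars_trm t)"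
| "RV Bot = {}"
| "RV (And G H) = RV G \<union> RV H"
| "RV (Or G H) = RV G \<inter> RV H"
| "RV (Imp G H) = {}"
| "RV (All G) = {}"
| "RV (Ex G) = {}"

fun kill :: "nat \<Rightarrow> ('p, 'c) fm \<Rightarrow> ('p, 'c) fm" where
  "kill x (Pred p ts) = (if x \<in> RV (Pred p ts :: ('p, 'c) fm) then Bot else Pred p ts)"
| "kill x (Eq s t) = (if x \<in> RV (Eq s t :: ('p, 'c) fm) then Bot else Eq s t)"
| "kill x Bot = Bot"
| "kill x (And G H) = And (kill x G) (kill x H)"
| "kill x (Or G H) = Or (kill x G) (kill x H)"
| "kill x (Imp G H) = Imp (kill x G) (kill x H)"
| "kill x (All G) = All (kill x G)"
| "kill x (Ex G) = Ex (kill x G)"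

definition simp_and :: "('p, 'c) fm \<Rightarrow> ('p, 'c) fm \<Rightarrow> ('p, 'c) fm" where
  "simp_and G H =
     (if G = Bot \<or> H = Bot then Bot
      else if G = Top then H
      else if H = Top then G
      else And G H)"

definition simp_or :: "('p, 'c) fm \<Rightarrow> ('p, 'c) fm \<Rightarrow> ('p, 'c) fm" where
  "simp_or G H =
     (if G = Top \<or> H = Top then Top
      else if G = Bot then H
      else if H = Bot then G
      else Or G H)"

definition simp_imp :: "('p, 'c) fm \<Rightarrow> ('p, 'c) fm \<Rightarrow> ('p, 'c) fm" where
  "simp_imp G H =
     (if G = Bot \<or> H = Top then Top
      else if G = Top then H
      else Imp G H)"

fun simplify :: "('p, 'c) fm \<Rightarrow> ('p, 'c) fm" where
  "simplify (And G H) = simp_and (simplify G) (simplify H)"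
| "simplify (Or G H) = simp_or (simplify G) (simplify H)"
| "simplify (Imp G H) = simp_imp (simplify G) (simplify H)"
| "simplify G = G"

definition pos_weakly_restricted :: "nat \<Rightarrow> ('p, 'c) fm \<Rightarrow> bool" where
  "pos_weakly_restricted x G = (simplify (kill x G) = Top)"

definition neg_weakly_restricted :: "nat \<Rightarrow> ('p, 'c) fm \<Rightarrow> bool" where
  "neg_weakly_restricted x G = (simplify (kill x G) = Bot)"

definition in_c :: "'c list \<Rightarrow> 'c trm list \<Rightarrow> ('p, 'c) fm" where
  "in_c cs ts = BigAnd (map (\<lambda>t. BigOr (map (\<lambda>c. Eq t (Const c)) cs)) ts)"

definition SPP_axiom :: "'c list \<Rightarrow> 'p \<times> nat \<Rightarrow> ('p, 'c) fm" where
  "SPP_axiom cs pn = (case pn of (p, n) \<Rightarrow>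
     Alls n (Imp (Pred p (map Var (rev [0..<n]))) (in_c cs (map Var (rev [0..<n])))))"

definition SPP :: "'c list \<Rightarrow> ('p, 'c) fm \<Rightarrow> ('p, 'c) fm" where
  "SPP cs F = BigAnd (map (SPP_axiom cs) (preds F))"

fun liftt :: "nat \<Rightarrow> 'c trm \<Rightarrow> 'c trm" where
  "liftt k (Var i) = (if i < k then Var i else Var (Suc i))"
| "liftt k (Const c) = Const c"

fun liftf :: "nat \<Rightarrow> ('p, 'c) fm \<Rightarrow> ('p, 'c) fm" where
  "liftf k (Pred p ts) = Pred p (map (liftt k) ts)"
| "liftf k (Eq s t) = Eq (liftt k s) (liftt k t)"
| "liftf k Bot = Bot"
| "liftf k (And G H) = And (liftf k G) (liftf k H)"
| "liftf k (Or G H) = Or (liftf k G) (liftf k H)"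
| "liftf k (Imp G H) = Imp (liftf k G) (liftf k H)"
| "liftf k (All G) = All (liftf (Suc k) G)"
| "liftf k (Ex G) = Ex (liftf (Suc k) G)"

fun substt :: "'c trm \<Rightarrow> 'c trm \<Rightarrow> nat \<Rightarrow> 'c trm" where
  "substt (Var i) s k = (if i < k then Var i else if i = k then s else Var (i - 1))"
| "substt (Const c) s k = Const c"

fun substf :: "('p, 'c) fm \<Rightarrow> 'c trm \<Rightarrow> nat \<Rightarrow> ('p, 'c) fm" where
  "substf (Pred p ts) s k = Pred p (map (\<lambda>t. substt t s k) ts)"
| "substf (Eq t u) s k = Eq (substt t s k) (substt u s k)"
| "substf Bot s k = Bot"
| "substf (And G H) s k = And (substf G s k) (substf H s k)"
| "substf (Or G H) s k = Or (substf G s k) (substf H s k)"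
| "substf (Imp G H) s k = Imp (substf G s k) (substf H s k)"
| "substf (All G) s k = All (substf G (liftt 0 s) (Suc k))"
| "substf (Ex G) s k = Ex (substf G (liftt 0 s) (Suc k))"

inductive deriv :: "('p, 'c) fm list \<Rightarrow> ('p, 'c) fm \<Rightarrow> bool" where
  Assum: "G \<in> set \<Gamma> \<Longrightarrow> deriv \<Gamma> G"
| BotE: "deriv \<Gamma> Bot \<Longrightarrow> deriv \<Gamma> G"
| AndI: "deriv \<Gamma> G \<Longrightarrow> deriv \<Gamma> H \<Longrightarrow> deriv \<Gamma> (And G H)"
| AndE1: "deriv \<Gamma> (And G H) \<Longrightarrow> deriv \<Gamma> G"
| AndE2: "deriv \<Gamma> (And G H) \<Longrightarrow> deriv \<Gamma> H"
| OrI1: "deriv \<Gamma> G \<Longrightarrow> deriv \<Gamma> (Or G H)"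
| OrI2: "deriv \<Gamma> H \<Longrightarrow> deriv \<Gamma> (Or G H)"
| OrE: "deriv \<Gamma> (Or G H) \<Longrightarrow> deriv (G # \<Gamma>) K \<Longrightarrow> deriv (H # \<Gamma>) K \<Longrightarrow> deriv \<Gamma> K"
| ImpI: "deriv (G # \<Gamma>) H \<Longrightarrow> deriv \<Gamma> (Imp G H)"
| ImpE: "deriv \<Gamma> (Imp G H) \<Longrightarrow> deriv \<Gamma> G \<Longrightarrow> deriv \<Gamma> H"
| AllI: "deriv (map (liftf 0) \<Gamma>) G \<Longrightarrow> deriv \<Gamma> (All G)"
| AllE: "deriv \<Gamma> (All G) \<Longrightarrow> deriv \<Gamma> (substf G t 0)"
| ExI: "deriv \<Gamma> (substf G t 0) \<Longrightarrow> deriv \<Gamma> (Ex G)"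
| ExE: "deriv \<Gamma> (Ex G) \<Longrightarrow> deriv (G # map (liftf 0) \<Gamma>) (liftf 0 H) \<Longrightarrow> deriv \<Gamma> H"
| EqRefl: "deriv \<Gamma> (Eq t t)"
| EqSubst: "deriv \<Gamma> (Eq s t) \<Longrightarrow> deriv \<Gamma> (substf G s 0) \<Longrightarrow> deriv \<Gamma> (substf G t 0)"

end

theory Submission
  imports Defs
begin

text \<open>Assume \<open>\<not> in\<^sub>c(x)\<close> and \<open>SPP\<^sub>c\<close>. Then every atomic formula \<open>A\<close> with \<open>x \<in> RV(A)\<close>
  is refutable: either \<open>A\<close> is \<open>p(\<dots>, x, \<dots>)\<close>, and \<open>SPP\<^sub>c\<close> yields \<open>in\<^sub>c(x)\<close>, or \<open>A\<close> is
  \<open>x = c\<close> or \<open>c = x\<close> with \<open>c \<in> set cs\<close>, which is a disjunct of \<open>in\<^sub>c(x)\<close>. Hence \<open>F\<close> is equivalent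
  to the formula obtained by replacing these atoms by \<open>\<bottom>\<close>. Every simplification
  transformation is an intuitionistic equivalence, and equivalence is a congruence for the
  connectives, so \<open>F\<close> is equivalent to the simplified formula, which is \<open>\<top>\<close> or \<open>\<bottom>\<close>.\<close>

lemma deriv_mono: "deriv \<Gamma> G \<Longrightarrow> set \<Gamma> \<subseteq> set \<Delta> \<Longrightarrow> deriv \<Delta> G"
proof (induction arbitrary: \<Delta> rule: deriv.induct)
  case (Assum G \<Gamma>)
  then show ?case by (auto intro: deriv.Assum)
next
  case (OrE \<Gamma> G H K)
  have "deriv \<Delta> (Or G H)" using OrE by blast
  moreover have "deriv (G # \<Delta>) K" using OrE.IH(2)[of "G # \<Delta>"] OrE.prems by auto
  moreover have "deriv (H # \<Delta>) K" using OrE.IH(3)[of "H # \<Delta>"] OrE.prems by auto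
  ultimately show ?case by (rule deriv.OrE)
next
  case (ImpI G \<Gamma> H)
  then show ?case by (metis deriv.ImpI insert_mono list.set(2))
next
  case (AllI \<Gamma> G)
  then show ?case by (metis deriv.AllI image_mono set_map)
next
  case (ExE \<Gamma> G H)
  then show ?case by (metis deriv.ExE image_mono set_map insert_mono list.set(2))
next
  case (EqSubst \<Gamma> s t G)
  then show ?case by (blast intro: deriv.EqSubst)
qed (auto intro: deriv.intros)

lemma deriv_Cons: "deriv \<Gamma> G \<Longrightarrow> deriv (H # \<Gamma>) G"
  by (erule deriv_mono) auto

lemma deriv_hd: "deriv (G # \<Gamma>) G"
  by (rule Assum) simp

lemma Top_neq_Bot [simp]: "Top \<noteq> Bot" "Bot \<noteq> Top"
  by (auto simp: Top_def)

lemma deriv_Top: "deriv \<Delta> Top"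
  unfolding Top_def by (rule ImpI, rule deriv_hd)

lemma deriv_NegE: "deriv \<Delta> (Neg A) \<Longrightarrow> deriv \<Delta> A \<Longrightarrow> deriv \<Delta> Bot"
  unfolding Neg_def by (rule ImpE)

lemma deriv_IffI: "deriv (A # \<Delta>) B \<Longrightarrow> deriv (B # \<Delta>) A \<Longrightarrow> deriv \<Delta> (Iff A B)"
  unfolding Iff_def by (intro AndI ImpI)

lemma deriv_IffD1: "deriv \<Delta> (Iff A B) \<Longrightarrow> deriv \<Delta> A \<Longrightarrow> deriv \<Delta> B"
  unfolding Iff_def by (blast intro: ImpE AndE1)

lemma deriv_IffD2: "deriv \<Delta> (Iff A B) \<Longrightarrow> deriv \<Delta> B \<Longrightarrow> deriv \<Delta> A"
  unfolding Iff_def by (blast intro: ImpE AndE2)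

lemma deriv_Iff_refl: "deriv \<Delta> (Iff A A)"
  by (rule deriv_IffI) (rule deriv_hd)+

lemma deriv_Iff_trans: "deriv \<Delta> (Iff A B) \<Longrightarrow> deriv \<Delta> (Iff B C) \<Longrightarrow> deriv \<Delta> (Iff A C)"
  by (rule deriv_IffI) (meson deriv_IffD1 deriv_IffD2 deriv_Cons deriv_hd)+

lemma deriv_Iff_Bot: "deriv \<Delta> (Neg A) \<Longrightarrow> deriv \<Delta> (Iff A Bot)"
  by (rule deriv_IffI) (auto intro: deriv_NegE[OF deriv_Cons deriv_hd] BotE[OF deriv_hd])

lemma deriv_Iff_And_cong:
  "deriv \<Delta> (Iff A A') \<Longrightarrow> deriv \<Delta> (Iff B B') \<Longrightarrow> deriv \<Delta> (Iff (And A B) (And A' B'))"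
  by (rule deriv_IffI) (meson AndI AndE1 AndE2 deriv_IffD1 deriv_IffD2 deriv_Cons deriv_hd)+

lemma deriv_Iff_Or_cong:
  "deriv \<Delta> (Iff A A') \<Longrightarrow> deriv \<Delta> (Iff B B') \<Longrightarrow> deriv \<Delta> (Iff (Or A B) (Or A' B'))"
  by (rule deriv_IffI; rule OrE[OF deriv_hd])
    (meson OrI1 OrI2 deriv_IffD1 deriv_IffD2 deriv_Cons deriv_hd)+

lemma deriv_Iff_Imp_cong:
  "deriv \<Delta> (Iff A A') \<Longrightarrow> deriv \<Delta> (Iff B B') \<Longrightarrow> deriv \<Delta> (Iff (Imp A B) (Imp A' B'))"
  by (rule deriv_IffI; rule ImpI) (meson ImpE deriv_IffD1 deriv_IffD2 deriv_Cons deriv_hd)+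

lemma deriv_Iff_simp_and: "deriv \<Delta> (Iff (And A B) (simp_and A B))"
  unfolding simp_and_def
  by (auto intro!: deriv_IffI deriv_Iff_refl
      intro: BotE[OF deriv_hd] AndE1[OF deriv_hd] AndE2[OF deriv_hd] AndI deriv_Top deriv_hd)

lemma deriv_Iff_simp_or: "deriv \<Delta> (Iff (Or A B) (simp_or A B))"
  unfolding simp_or_def
  by (auto intro!: deriv_IffI deriv_Iff_refl
      intro: deriv_Top OrI1 OrI2 deriv_hd OrE[OF deriv_hd deriv_hd BotE[OF deriv_hd]]
        OrE[OF deriv_hd BotE[OF deriv_hd] deriv_hd])

lemma deriv_Iff_simp_imp: "deriv \<Delta> (Iff (Imp A B) (simp_imp A B))"
  unfolding simp_imp_def
  by (auto intro!: deriv_IffI deriv_Iff_refl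
      intro: deriv_Top ImpI BotE[OF deriv_hd] ImpE[OF deriv_hd deriv_Top]
        ImpI[OF deriv_Cons[OF deriv_hd]])

lemma deriv_Iff_simplify: "deriv \<Delta> (Iff G (simplify G))"
  by (induction G rule: simplify.induct)
    (auto intro: deriv_Iff_trans deriv_Iff_And_cong deriv_Iff_Or_cong deriv_Iff_Imp_cong
      deriv_Iff_simp_and deriv_Iff_simp_or deriv_Iff_simp_imp deriv_Iff_refl)

fun inst_Alls :: "'c trm list \<Rightarrow> ('p, 'c) fm \<Rightarrow> ('p, 'c) fm" where
  "inst_Alls (t # ts) (All G) = inst_Alls ts (substf G t 0)"
| "inst_Alls _ G = G"

lemma deriv_inst_Alls: "deriv \<Delta> G \<Longrightarrow> deriv \<Delta> (inst_Alls ts G)"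
  by (induction ts G rule: inst_Alls.induct) (auto intro: AllE)

lemma funpow_liftt_Var: "(liftt 0 ^^ m) (Var v) = Var (v + m)"
  by (induction m) auto

lemma funpow_liftt_Const: "(liftt 0 ^^ m) (Const c) = Const c"
  by (induction m) auto

lemma substf_Alls: "substf (Alls m G) t k = Alls m (substf G ((liftt 0 ^^ m) t) (k + m))"
proof (induction m arbitrary: t k)
  case 0
  then show ?case by simp
next
  case (Suc m)
  have "(liftt 0 ^^ m) (liftt 0 t) = (liftt 0 ^^ Suc m) t" by (simp add: funpow_swap1)
  then show ?case using Suc by simp
qed

lemma substf_BigAnd: "substf (BigAnd Gs) s k = BigAnd (map (\<lambda>G. substf G s k) Gs)"
  by (induction Gs rule: BigAnd.induct) (auto simp: Top_def)

lemma substf_BigOr: "substf (BigOr Gs) s k = BigOr (map (\<lambda>G. substf G s k) Gs)"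
  by (induction Gs rule: BigOr.induct) auto

lemma substf_in_c: "substf (in_c cs us) s k = in_c cs (map (\<lambda>u. substt u s k) us)"
  by (simp add: in_c_def substf_BigAnd substf_BigOr o_def)

text \<open>The effect on a term of instantiating \<open>n = length ts\<close> outer quantifiers by \<open>ts\<close>: the
  head of \<open>ts\<close> replaces the outermost bound variable \<open>n - 1\<close>, lifted past the \<open>n - 1\<close>
  binders that remain.\<close>

fun subst_seq :: "'c trm list \<Rightarrow> 'c trm \<Rightarrow> 'c trm" where
  "subst_seq [] u = u"
| "subst_seq (t # ts) u = subst_seq ts (substt u ((liftt 0 ^^ length ts) t) (length ts))"

lemma inst_Alls_Imp_Pred_in_c:
  "inst_Alls ts (Alls (length ts) (Imp (Pred p us) (in_c cs us)))
     = (Imp (Pred p (map (subst_seq ts) us)) (in_c cs (map (subst_seq ts) us)) :: ('p, 'c) fm)"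
proof (induction ts arbitrary: us)
  case Nil
  then show ?case by simp
next
  case (Cons t ts)
  show ?case
    using Cons[of "map (\<lambda>u. substt u ((liftt 0 ^^ length ts) t) (length ts)) us"]
    by (simp add: substf_Alls substf_in_c o_def)
qed

lemma subst_seq_lifted: "subst_seq ts ((liftt 0 ^^ length ts) t) = t"
proof (induction ts)
  case Nil
  then show ?case by simp
next
  case (Cons s ts)
  then show ?case
    by (cases t) (simp_all add: funpow_liftt_Var funpow_liftt_Const del: funpow.simps)
qed

lemma subst_seq_Var: "j < length ts \<Longrightarrow> subst_seq ts (Var j) = ts ! (length ts - 1 - j)"
proof (induction ts arbitrary: j)
  case Nil
  then show ?case by simp
next
  case (Cons t ts)
  show ?case
  proof (cases "j < length ts")
    case True
    then show ?thesis using Cons by (simp add: nth_Cons')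
  next
    case False
    then have "j = length ts" using Cons.prems by simp
    then show ?thesis using subst_seq_lifted[of ts t] by simp
  qed
qed

lemma map_subst_seq_bound_vars: "map (subst_seq ts \<circ> Var) (rev [0..<length ts]) = ts"
  by (rule nth_equalityI) (auto simp: rev_nth subst_seq_Var)

lemma deriv_BigAnd_member: "G \<in> set Gs \<Longrightarrow> deriv \<Delta> (BigAnd Gs) \<Longrightarrow> deriv \<Delta> G"
  by (induction Gs rule: BigAnd.induct) (auto intro: AndE1 AndE2)

lemma deriv_BigOr_member: "G \<in> set Gs \<Longrightarrow> deriv \<Delta> G \<Longrightarrow> deriv \<Delta> (BigOr Gs)"
  by (induction Gs rule: BigOr.induct) (auto intro: OrI1 OrI2)

lemma deriv_SPP_instance:
  assumes "(p, length ts) \<in> set (preds F)" and "deriv \<Delta> (SPP cs F)"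
  shows "deriv \<Delta> (Imp (Pred p ts) (in_c cs ts))"
proof -
  have "deriv \<Delta> (SPP_axiom cs (p, length ts))"
    using assms(2) unfolding SPP_def
    by (rule deriv_BigAnd_member[rotated]) (use assms(1) in simp)
  then have "deriv \<Delta> (inst_Alls ts (SPP_axiom cs (p, length ts)))"
    by (rule deriv_inst_Alls)
  then show ?thesis
    unfolding SPP_axiom_def by (simp add: inst_Alls_Imp_Pred_in_c map_subst_seq_bound_vars)
qed

lemma deriv_in_c_member: "t \<in> set ts \<Longrightarrow> deriv \<Delta> (in_c cs ts) \<Longrightarrow> deriv \<Delta> (in_c cs [t])"
  unfolding in_c_def by (erule deriv_BigAnd_member[rotated]) force

lemma deriv_in_c_Eq: "c \<in> set cs \<Longrightarrow> deriv \<Delta> (Eq t (Const c)) \<Longrightarrow> deriv \<Delta> (in_c cs [t])"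
  unfolding in_c_def by (simp, rule deriv_BigOr_member) auto

lemma deriv_Eq_sym: "deriv \<Delta> (Eq s t) \<Longrightarrow> deriv \<Delta> (Eq t s)"
  using EqSubst[where G = "Eq (Var 0) (liftt 0 s)" and s = s and t = t] EqRefl
  by (cases s; cases t) auto

lemma deriv_Neg_restricted_Pred:
  assumes "x \<in> RV (Pred p ts :: ('p, 'c) fm)" and "(p, length ts) \<in> set (preds F)"
    and "deriv \<Delta> (Neg (in_c cs [Var x]))" and "deriv \<Delta> (SPP cs F)"
  shows "deriv \<Delta> (Neg (Pred p ts))"
proof -
  obtain t where "t \<in> set ts" and "x \<in> vars_trm t" using assms(1) by auto
  moreover from \<open>x \<in> vars_trm t\<close> have "t = Var x" by (cases t) auto
  ultimately have "Var x \<in> set ts" by simp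
  have "deriv (Pred p ts # \<Delta>) (in_c cs ts)"
    using assms(2,4) by (blast intro: ImpE[OF deriv_SPP_instance deriv_hd] deriv_Cons)
  with \<open>Var x \<in> set ts\<close> have "deriv (Pred p ts # \<Delta>) (in_c cs [Var x])"
    by (rule deriv_in_c_member)
  then show ?thesis
    unfolding Neg_def using assms(3) by (blast intro: ImpI deriv_NegE deriv_Cons)
qed

lemma deriv_Neg_restricted_Eq:
  assumes "x \<in> RV (Eq s t :: ('p, 'c) fm)" and "consts_trm s \<union> consts_trm t \<subseteq> set cs"
    and "deriv \<Delta> (Neg (in_c cs [Var x]))"
  shows "deriv \<Delta> (Neg (Eq s t :: ('p, 'c) fm))"
proof -
  obtain c where "c \<in> set cs" and "(s, t) = (Var x, Const c) \<or> (s, t) = (Const c, Var x)"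
    using assms(1,2) by (cases s; cases t) auto
  then have "deriv (Eq s t # \<Delta>) (Eq (Var x) (Const c))"
    by (auto intro: deriv_hd deriv_Eq_sym)
  then have "deriv (Eq s t # \<Delta>) (in_c cs [Var x])"
    using \<open>c \<in> set cs\<close> by (rule deriv_in_c_Eq[rotated])
  then show ?thesis
    unfolding Neg_def using assms(3) by (blast intro: ImpI deriv_NegE deriv_Cons)
qed

lemma deriv_Iff_kill:
  fixes G F :: "('p, 'c) fm"
  assumes "qfree G" and "set (preds G) \<subseteq> set (preds F)" and "consts_fm G \<subseteq> set cs"
    and "deriv \<Delta> (Neg (in_c cs [Var x]))" and "deriv \<Delta> (SPP cs F)"
  shows "deriv \<Delta> (Iff G (kill x G))"
  using assms(1-3)
proof (induction G)
  case (Pred p ts)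
  show ?case
  proof (cases "x \<in> RV (Pred p ts :: ('p, 'c) fm)")
    case True
    then have "deriv \<Delta> (Neg (Pred p ts))"
      using Pred.prems assms(4,5) by (intro deriv_Neg_restricted_Pred) auto
    with True show ?thesis by (simp add: deriv_Iff_Bot)
  qed (simp add: deriv_Iff_refl)
next
  case (Eq s t)
  show ?case
  proof (cases "x \<in> RV (Eq s t :: ('p, 'c) fm)")
    case True
    then have "deriv \<Delta> (Neg (Eq s t :: ('p, 'c) fm))"
      using Eq.prems assms(4) by (intro deriv_Neg_restricted_Eq) auto
    with True show ?thesis by (simp add: deriv_Iff_Bot)
  qed (simp add: deriv_Iff_refl)
qed (auto intro: deriv_Iff_refl deriv_Iff_And_cong deriv_Iff_Or_cong deriv_Iff_Imp_cong)

theorem lemma7: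
  fixes F :: "('p, 'c) fm" and x :: nat and cs :: "'c list"
  assumes "qfree F"
    and "cs \<noteq> []"
    and "consts_fm F \<subseteq> set cs"
  shows "(pos_weakly_restricted x F \<longrightarrow>
            deriv [SPP cs F] (Imp (Neg (in_c cs [Var x])) (Iff F Top)))
       \<and> (neg_weakly_restricted x F \<longrightarrow>
            deriv [SPP cs F] (Imp (Neg (in_c cs [Var x])) (Iff F Bot)))"
proof -
  let ?\<Delta> = "[Neg (in_c cs [Var x]), SPP cs F]"
  have "deriv ?\<Delta> (Iff F (kill x F))"
    using assms(1,3) by (auto intro: deriv_Iff_kill deriv_hd deriv_Cons)
  then have "deriv ?\<Delta> (Iff F (simplify (kill x F)))"
    using deriv_Iff_simplify by (rule deriv_Iff_trans)
  then show ?thesis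
    unfolding pos_weakly_restricted_def neg_weakly_restricted_def by (auto intro: ImpI)
qed

end
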